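(* Let $M\ge1$, let $a>\log M+3$, and let $X\sim\mathcal{N}(\mu^*,1)$ on $\mathbb{R}$ with $\mu^*\ge a$. Let $\mu_1,\dots,\mu_M\in\mathbb{R}$ be current centers and let $i\in[M]$ with $\mu_i\ge0$. Then $$\mathbb{E}[w_i(X)X]\ge0.$$ If moreover $\mu^*\le3a$ and $0\le\mu_i\le4a$, then $$\mathbb{E}[w_i(X)X]\ge\frac{a}{5M}e^{-9a^2/2}.$$
   Context: For current centers $\mu_1,\dots,\mu_M\in\mathbb{R}$, the membership weights are $$w_i(x)=\frac{e^{-(x-\mu_i)^2/2}}{\sum_{j=1}^M e^{-(x-\mu_j)^2/2}}.$$ *)

theory Defs
  imports "HOL-Probability.Probability"
begin

text \<open>Membership weight of center i (0-based indices 0..M-1) at point x.\<close>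
definition weight :: "nat \<Rightarrow> (nat \<Rightarrow> real) \<Rightarrow> nat \<Rightarrow> real \<Rightarrow> real" where
  "weight M mu i x = exp (- (x - mu i)\<^sup>2 / 2) / (\<Sum>j<M. exp (- (x - mu j)\<^sup>2 / 2))"

end

theory Submission
  imports Defs
begin

text \<open>Split the expectation over x < 0, [1, 2] and the rest. For x < y \<le> 2 and mu_i \<ge> 0 each
  Gaussian ratio e_j / e_i grows by at most e^2 from x to y, so w_i(x) \<le> (1 + M e^2) w_i(y);
  averaging over y \<in> [1, 2] bounds w_i on the negative half-line by a multiple of
  K = \<integral>_[1,2] \<phi> w_i, where \<phi> is the density of X. As |x| \<phi>(x) \<le> e^(-mu*^2/2) \<phi>_0(x) / 4 for x < 0
  and mu* \<ge> log M + 3, the negative part is at least -K, which the part over [1, 2] compensates.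
  The remaining integrand is nonnegative and exceeds the stated constant on a unit interval just
  above the midpoint (mu_i + mu*) / 2.\<close>

lemma weight_borel_measurable [measurable]: "weight M mu i \<in> borel_measurable borel"
  unfolding weight_def[abs_def] by measurable

lemma gaussian_le_gaussian_sum:
  fixes mu :: "nat \<Rightarrow> real"
  assumes "i < M"
  shows "exp (- (x - mu i)\<^sup>2 / 2) \<le> (\<Sum>j<M. exp (- (x - mu j)\<^sup>2 / 2))"
  using assms by (intro member_le_sum) auto

lemma gaussian_sum_le_card:
  fixes mu :: "nat \<Rightarrow> real"
  shows "(\<Sum>j<M. exp (- (x - mu j)\<^sup>2 / 2)) \<le> real M"
  using sum_mono[of "{..<M}" "\<lambda>j. exp (- (x - mu j)\<^sup>2 / 2)" "\<lambda>_. 1"] by simp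

lemma gaussian_sum_pos:
  fixes mu :: "nat \<Rightarrow> real"
  assumes "i < M"
  shows "0 < (\<Sum>j<M. exp (- (x - mu j)\<^sup>2 / 2))"
  using gaussian_le_gaussian_sum[OF assms, of x mu] by (meson exp_gt_zero less_le_trans)

lemma weight_nonneg: "i < M \<Longrightarrow> 0 \<le> weight M mu i x"
  unfolding weight_def using gaussian_sum_pos[of i M x mu] by simp

lemma weight_le_1: "i < M \<Longrightarrow> weight M mu i x \<le> 1"
  unfolding weight_def using gaussian_le_gaussian_sum[of i M x mu] gaussian_sum_pos[of i M x mu]
  by (simp add: divide_le_eq_1)

lemma gaussian_div_card_le_weight:
  "i < M \<Longrightarrow> exp (- (x - mu i)\<^sup>2 / 2) / real M \<le> weight M mu i x"
  unfolding weight_def using gaussian_sum_pos[of i M x mu] gaussian_sum_le_card[of x mu M]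
  by (intro divide_left_mono) auto

lemma gaussian_ratio_le:
  fixes b c x y :: real
  assumes "x < y" "y \<le> 2" "0 \<le> c"
  shows "exp (- (y - b)\<^sup>2 / 2) / exp (- (y - c)\<^sup>2 / 2)
       \<le> exp (- (x - b)\<^sup>2 / 2) / exp (- (x - c)\<^sup>2 / 2) + exp 2"
proof -
  define d where "d = b - c"
  have ratio: "exp (- (z - b)\<^sup>2 / 2) / exp (- (z - c)\<^sup>2 / 2) = exp (d * (z - c) - d\<^sup>2 / 2)"
    for z :: real
    by (simp add: d_def exp_diff[symmetric] power2_eq_square field_simps)
  show ?thesis
  proof (cases "d \<le> 0")
    case True
    then have "d * (y - c) \<le> d * (x - c)"
      using assms by (simp add: mult_left_mono_neg)
    then have "exp (d * (y - c) - d\<^sup>2 / 2) \<le> exp (d * (x - c) - d\<^sup>2 / 2)" by simp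
    then show ?thesis unfolding ratio by (simp add: add_increasing2)
  next
    case False
    have "d * (y - c) - d\<^sup>2 / 2 \<le> 2"
    proof (cases "y - c \<le> 0")
      case True
      then have "d * (y - c) \<le> 0" using False by (simp add: mult_nonneg_nonpos)
      then show ?thesis using zero_le_power2[of d] by linarith
    next
      case positive: False
      have "d * (y - c) - d\<^sup>2 / 2 \<le> (y - c)\<^sup>2 / 2"
        using zero_le_power2[of "d - (y - c)"] by (simp add: power2_eq_square algebra_simps)
      moreover have "(y - c)\<^sup>2 \<le> 2\<^sup>2"
        using positive assms by (intro power_mono) auto
      ultimately show ?thesis by simp
    qed
    then have "exp (d * (y - c) - d\<^sup>2 / 2) \<le> exp 2" by simp
    then show ?thesis unfolding ratio by (simp add: add_increasing)
  qed
qed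

lemma weight_le_mult_weight:
  fixes mu :: "nat \<Rightarrow> real"
  assumes "i < M" "x < y" "y \<le> 2" "0 \<le> mu i"
  shows "weight M mu i x \<le> (1 + real M * exp 2) * weight M mu i y"
proof -
  define e where "e j z = exp (- (z - mu j)\<^sup>2 / 2)" for j z
  define R where "R z = (\<Sum>j<M. e j z) / e i z" for z
  have weight_eq: "weight M mu i z = 1 / R z" for z
    unfolding weight_def R_def e_def by simp
  have R_ge_1: "1 \<le> R x"
    using gaussian_le_gaussian_sum[OF assms(1)] by (simp add: R_def e_def)
  have "R y = (\<Sum>j<M. e j y / e i y)"
    unfolding R_def by (simp add: sum_divide_distrib)
  also have "\<dots> \<le> (\<Sum>j<M. e j x / e i x + exp 2)"
    unfolding e_def by (intro sum_mono gaussian_ratio_le assms)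
  also have "\<dots> = R x + real M * exp 2"
    unfolding R_def by (simp add: sum.distrib sum_divide_distrib)
  also have "\<dots> \<le> (1 + real M * exp 2) * R x"
    using mult_left_mono[OF R_ge_1, of "real M * exp 2"] by (simp add: algebra_simps)
  finally have "R y \<le> (1 + real M * exp 2) * R x" .
  moreover have "0 < R y"
    unfolding R_def e_def using gaussian_sum_pos[OF assms(1)] by simp
  ultimately show ?thesis
    unfolding weight_eq using R_ge_1 by (simp add: field_simps)
qed

lemma sqrt_2_pi_le_3: "sqrt (2 * pi) \<le> 3"
  using pi_less_4 real_sqrt_le_mono[of "2 * pi" "3\<^sup>2"] by simp

lemma normal_density_1_conv_std_normal_density: "normal_density mu 1 x = std_normal_density x * exp (mu * x) * exp (- mu\<^sup>2 / 2)"
  by (simp add: normal_density_def exp_add[symmetric] power2_eq_square algebra_simps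
      diff_divide_distrib add_divide_distrib)

lemma neg_mult_exp_le:
  fixes c x :: real
  assumes "x < 0" "3 \<le> c"
  shows "- x * exp (c * x) \<le> 1 / 4"
proof -
  define t where "t = - x"
  have t: "0 < t" using assms by (simp add: t_def)
  have "4 * t \<le> (1 + 3 * t / 2)\<^sup>2"
    using zero_le_power2[of "3 * t / 2 - 1 / 3"] by (simp add: power2_eq_square field_simps)
  also have "\<dots> \<le> (exp (3 * t / 2))\<^sup>2"
    using t exp_ge_add_one_self[of "3 * t / 2"] by (intro power_mono) auto
  also have "\<dots> = exp (3 * t)"
    by (simp add: power2_eq_square exp_add[symmetric])
  finally have exp_ge: "4 * t \<le> exp (3 * t)" .
  have "exp (c * x) \<le> exp (- 3 * t)"
    using assms by (simp add: t_def mult_right_mono_neg)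
  then have "t * exp (c * x) \<le> t / exp (3 * t)"
    using t by (simp add: exp_minus field_simps)
  also have "\<dots> \<le> 1 / 4"
    using exp_ge by (simp add: field_simps)
  finally show ?thesis by (simp add: t_def)
qed

lemma neg_mult_normal_density_le:
  assumes "x < 0" "3 \<le> mu"
  shows "- x * normal_density mu 1 x \<le> exp (- mu\<^sup>2 / 2) / 4 * std_normal_density x"
proof -
  have "- x * normal_density mu 1 x = (- x * exp (mu * x)) * (std_normal_density x * exp (- mu\<^sup>2 / 2))"
    unfolding normal_density_1_conv_std_normal_density[of mu x] by (simp add: algebra_simps)
  also have "\<dots> \<le> 1 / 4 * (std_normal_density x * exp (- mu\<^sup>2 / 2))"
    using neg_mult_exp_le[OF assms] by (intro mult_right_mono) auto
  finally show ?thesis by (simp add: mult_ac)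
qed

lemma normal_density_at_1_ge:
  assumes "1 \<le> M" "ln (real M) + 3 \<le> mu"
  shows "(1 + real M * exp 2) * exp (- mu\<^sup>2 / 2) / 4 \<le> normal_density mu 1 1"
proof -
  have "0 \<le> ln (real M)"
    using assms(1) by simp
  then have "1 \<le> exp (mu - 1)"
    using assms(2) by simp
  moreover have "real M * exp 2 = exp (ln (real M) + 2)"
    using assms(1) by (simp add: exp_add)
  moreover have "\<dots> \<le> exp (mu - 1)"
    using assms(2) by simp
  ultimately have "1 + real M * exp 2 \<le> 2 * exp (mu - 1)"
    by linarith
  then have "(1 + real M * exp 2) / 4 \<le> exp (mu - 1) * (3 / 2) / 3"
    by simp
  also have "\<dots> \<le> exp (mu - 1) * exp (1 / 2) / sqrt (2 * pi)"
    using exp_ge_add_one_self[of "1 / 2 :: real"] sqrt_2_pi_le_3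
    by (intro frac_le mult_left_mono) auto
  also have "\<dots> = std_normal_density 1 * exp mu"
    unfolding std_normal_density_def by (simp add: exp_add[symmetric] field_simps)
  finally have "(1 + real M * exp 2) / 4 \<le> std_normal_density 1 * exp mu" .
  from mult_right_mono[OF this exp_ge_zero[of "- mu\<^sup>2 / 2"]] show ?thesis
    unfolding normal_density_1_conv_std_normal_density[of mu 1] by (simp add: field_simps)
qed

lemma normal_density_at_1_le_integral_1_2:
  fixes mu s :: real
  assumes "0 < s" "3 / 2 \<le> mu"
  shows "normal_density mu s 1 \<le> (\<integral>y. normal_density mu s y * indicator {1..2} y \<partial>lborel)"
proof -
  have "normal_density mu s 1 = (\<integral>y. normal_density mu s 1 * indicator {1..2} (y::real) \<partial>lborel)"
    by simp
  also have "\<dots> \<le> (\<integral>y. normal_density mu s y * indicator {1..2} y \<partial>lborel)"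
  proof (rule integral_mono)
    show "integrable lborel (\<lambda>y. normal_density mu s y * indicator {1..2} y)"
      using assms by (intro integrable_real_mult_indicator integrable_normal_density) auto
    fix y :: real
    have "(y - mu)\<^sup>2 \<le> (1 - mu)\<^sup>2" if "y \<in> {1..2}"
      using that assms by (intro abs_le_square_iff[THEN iffD1]) auto
    then show "normal_density mu s 1 * indicator {1..2} y \<le> normal_density mu s y * indicator {1..2} y"
      by (auto simp: normal_density_def indicator_def intro!: mult_left_mono divide_right_mono)
  qed simp
  finally show ?thesis .
qed

lemma integrable_mult_weight:
  fixes f :: "real \<Rightarrow> real"
  assumes "integrable lborel f" "i < M"
  shows "integrable lborel (\<lambda>x. f x * weight M mu i x)"
proof (rule Bochner_Integration.integrable_bound[OF assms(1)])
  show "AE x in lborel. norm (f x * weight M mu i x) \<le> norm (f x)"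
    using weight_nonneg[OF assms(2)] weight_le_1[OF assms(2)]
    by (intro AE_I2) (simp add: abs_mult mult_left_le)
qed (use assms(1) in measurable)

lemma weight_mult_integral_normal_density_le:
  assumes "i < M" "x < 1" "0 \<le> mu i" "0 < s"
  shows "weight M mu i x * (\<integral>y. normal_density m s y * indicator {1..2} y \<partial>lborel)
    \<le> (1 + real M * exp 2) * (\<integral>y. normal_density m s y * weight M mu i y * indicator {1..2} y \<partial>lborel)"
proof -
  have "weight M mu i x * (\<integral>y. normal_density m s y * indicator {1..2} y \<partial>lborel)
      = (\<integral>y. weight M mu i x * (normal_density m s y * indicator {1..2} y) \<partial>lborel)"
    by simp
  also have "\<dots> \<le> (\<integral>y. (1 + real M * exp 2) * (normal_density m s y * weight M mu i y * indicator {1..2} y) \<partial>lborel)"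
  proof (rule integral_mono)
    show "integrable lborel (\<lambda>y. weight M mu i x * (normal_density m s y * indicator {1..2} y))"
      using assms by (intro integrable_mult_right integrable_real_mult_indicator integrable_normal_density) auto
    show "integrable lborel (\<lambda>y. (1 + real M * exp 2) * (normal_density m s y * weight M mu i y * indicator {1..2} y))"
      using assms by (intro integrable_mult_right integrable_real_mult_indicator integrable_mult_weight
          integrable_normal_density) auto
    fix y :: real
    show "weight M mu i x * (normal_density m s y * indicator {1..2} y)
      \<le> (1 + real M * exp 2) * (normal_density m s y * weight M mu i y * indicator {1..2} y)"
    proof (cases "y \<in> {1..2}")
      case True
      then have "weight M mu i x * normal_density m s y \<le> (1 + real M * exp 2) * weight M mu i y * normal_density m s y"
        using assms by (intro mult_right_mono weight_le_mult_weight) auto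
      then show ?thesis using True by (simp add: mult_ac)
    qed simp
  qed
  finally show ?thesis by simp
qed

lemma normal_density_mult_weight_mult_ge_on_neg:
  assumes "1 \<le> M" "ln (real M) + 3 \<le> mus" "i < M" "0 \<le> mu i" "x < 0"
  shows "- (\<integral>y. normal_density mus 1 y * weight M mu i y * indicator {1..2} y \<partial>lborel) * std_normal_density x
    \<le> normal_density mus 1 x * (weight M mu i x * x)"
proof -
  define K where "K = (\<integral>y. normal_density mus 1 y * weight M mu i y * indicator {1..2} y \<partial>lborel)"
  define C where "C = 1 + real M * exp 2"
  have "0 \<le> ln (real M)"
    using assms(1) by simp
  then have mus: "3 \<le> mus"
    using assms(2) by linarith
  have "weight M mu i x * normal_density mus 1 1 \<le> C * K"
    unfolding C_def K_def using assms mus weight_nonneg[OF assms(3)]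
    by (intro order_trans[OF mult_left_mono weight_mult_integral_normal_density_le]
        normal_density_at_1_le_integral_1_2) auto
  moreover have "weight M mu i x * (C * exp (- mus\<^sup>2 / 2) / 4) \<le> weight M mu i x * normal_density mus 1 1"
    unfolding C_def using assms weight_nonneg[OF assms(3)]
    by (intro mult_left_mono normal_density_at_1_ge) auto
  ultimately have "C * (weight M mu i x * (exp (- mus\<^sup>2 / 2) / 4)) \<le> C * K"
    by (simp add: mult_ac)
  moreover have "0 < C"
    unfolding C_def by (simp add: add_pos_nonneg)
  ultimately have weight_bound: "weight M mu i x * (exp (- mus\<^sup>2 / 2) / 4) \<le> K"
    by simp
  have "- (normal_density mus 1 x * (weight M mu i x * x)) = weight M mu i x * (- x * normal_density mus 1 x)"
    by simp
  also have "\<dots> \<le> weight M mu i x * (exp (- mus\<^sup>2 / 2) / 4 * std_normal_density x)"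
    using assms mus weight_nonneg[OF assms(3)]
    by (intro mult_left_mono neg_mult_normal_density_le) auto
  also have "\<dots> \<le> K * std_normal_density x"
    using mult_right_mono[OF weight_bound normal_density_nonneg[of 0 1 x]] by (simp add: mult_ac)
  finally show ?thesis
    unfolding K_def by simp
qed

lemma integral_normal_density_mult_weight_mult_ge_restricted:
  assumes "1 \<le> M" "ln (real M) + 3 \<le> mus" "i < M" "0 \<le> mu i"
  shows "(\<integral>x. normal_density mus 1 x * (weight M mu i x * x) * indicator ({0..<1} \<union> {2<..}) x \<partial>lborel)
    \<le> (\<integral>x. normal_density mus 1 x * (weight M mu i x * x) \<partial>lborel)"
proof -
  define g where "g x = normal_density mus 1 x * (weight M mu i x * x)" for x
  define K where "K = (\<integral>y. normal_density mus 1 y * weight M mu i y * indicator {1..2} y \<partial>lborel)"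
  have g: "integrable lborel g"
    unfolding g_def using integrable_mult_weight[OF integrable_normal_moment_nz_1 assms(3)]
    by (simp add: mult_ac)
  have split: "(\<integral>x. g x \<partial>lborel) = (\<integral>x. g x * indicator {..<0} x \<partial>lborel)
      + (\<integral>x. g x * indicator {1..2} x \<partial>lborel) + (\<integral>x. g x * indicator ({0..<1} \<union> {2<..}) x \<partial>lborel)"
  proof -
    have "(\<integral>x. g x \<partial>lborel) = (\<integral>x. g x * indicator {..<0} x + g x * indicator {1..2} x
        + g x * indicator ({0..<1} \<union> {2<..}) x \<partial>lborel)"
      by (rule Bochner_Integration.integral_cong) (auto simp: indicator_def)
    also have "\<dots> = (\<integral>x. g x * indicator {..<0} x \<partial>lborel)
      + (\<integral>x. g x * indicator {1..2} x \<partial>lborel) + (\<integral>x. g x * indicator ({0..<1} \<union> {2<..}) x \<partial>lborel)"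
      using g by (simp add: integrable_real_mult_indicator)
    finally show ?thesis .
  qed
  have K_nonneg: "0 \<le> K"
    unfolding K_def using weight_nonneg[OF assms(3)] by (intro integral_nonneg_AE AE_I2) auto
  have "- K = (\<integral>x. - K * std_normal_density x \<partial>lborel)"
    by simp
  also have "\<dots> \<le> (\<integral>x. g x * indicator {..<0} x \<partial>lborel)"
  proof (rule integral_mono)
    fix x :: real
    show "- K * std_normal_density x \<le> g x * indicator {..<0} x"
      using normal_density_mult_weight_mult_ge_on_neg[where mu = mu, OF assms, of x] K_nonneg
      by (cases "x < 0") (auto simp: g_def K_def)
  qed (use g in \<open>auto simp: integrable_real_mult_indicator\<close>)
  finally have negative_part: "- K \<le> (\<integral>x. g x * indicator {..<0} x \<partial>lborel)" .
  have "K \<le> (\<integral>x. g x * indicator {1..2} x \<partial>lborel)"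
    unfolding K_def
  proof (rule integral_mono)
    fix y :: real
    show "normal_density mus 1 y * weight M mu i y * indicator {1..2} y \<le> g y * indicator {1..2} y"
    proof (cases "y \<in> {1..2}")
      case True
      have "normal_density mus 1 y * weight M mu i y * 1 \<le> normal_density mus 1 y * weight M mu i y * y"
        using True weight_nonneg[OF assms(3), of mu y] by (intro mult_left_mono) auto
      then show ?thesis
        using True by (simp add: g_def mult_ac)
    qed simp
  qed (use g assms(3) in \<open>auto intro!: integrable_real_mult_indicator integrable_mult_weight\<close>)
  with split negative_part show ?thesis
    unfolding g_def by linarith
qed

lemma integral_mult_indicator_ge:
  fixes f :: "real \<Rightarrow> real"
  assumes "integrable lborel f" "A \<in> sets lborel" "{c..c + 1} \<subseteq> A"
    and "\<And>x. x \<in> A \<Longrightarrow> 0 \<le> f x" "\<And>x. x \<in> {c..c + 1} \<Longrightarrow> L \<le> f x"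
  shows "L \<le> (\<integral>x. f x * indicator A x \<partial>lborel)"
proof -
  have "L = (\<integral>x. L * indicator {c..c + 1} x \<partial>lborel)"
    by simp
  also have "\<dots> \<le> (\<integral>x. f x * indicator A x \<partial>lborel)"
  proof (rule integral_mono)
    fix x :: real
    show "L * indicator {c..c + 1} x \<le> f x * indicator A x"
      using assms(3-5) by (auto simp: indicator_def)
  qed (use assms(1,2) in \<open>auto intro: integrable_real_mult_indicator\<close>)
  finally show ?thesis .
qed

lemma normal_density_mult_weight_mult_ge_near_midpoint:
  fixes mu :: "nat \<Rightarrow> real"
  assumes "i < M" "3 < a" "a \<le> mus" "mus \<le> 3 * a" "0 \<le> mu i" "mu i \<le> 4 * a"
    and y: "(mu i + mus) / 2 + 1 \<le> y" "y \<le> (mu i + mus) / 2 + 2"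
  shows "a / (5 * real M) * exp (- 9 * a\<^sup>2 / 2) \<le> normal_density mus 1 y * (weight M mu i y * y)"
proof -
  define m where "m = (mu i + mus) / 2"
  have "- (y - mus)\<^sup>2 / 2 + - (y - mu i)\<^sup>2 / 2 = - (y - m)\<^sup>2 - (mus - mu i)\<^sup>2 / 4"
    unfolding m_def by (simp add: power2_eq_square field_simps)
  moreover have "(y - m)\<^sup>2 \<le> 2\<^sup>2"
    using y unfolding m_def[symmetric] by (intro power_mono) auto
  moreover have "(mus - mu i)\<^sup>2 \<le> (3 * a)\<^sup>2"
    using assms by (intro abs_le_square_iff[THEN iffD1]) auto
  ultimately have "- 4 - 9 * a\<^sup>2 / 4 \<le> - (y - mus)\<^sup>2 / 2 + - (y - mu i)\<^sup>2 / 2"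
    by (simp add: power_mult_distrib)
  then have "exp (- 4 - 9 * a\<^sup>2 / 4) / 3 \<le> exp (- (y - mus)\<^sup>2 / 2 + - (y - mu i)\<^sup>2 / 2) / sqrt (2 * pi)"
    using sqrt_2_pi_le_3 by (intro frac_le) auto
  also have "\<dots> = normal_density mus 1 y * exp (- (y - mu i)\<^sup>2 / 2)"
    by (simp add: normal_density_def exp_add[symmetric])
  finally have "exp (- 4 - 9 * a\<^sup>2 / 4) / 3 / real M \<le> normal_density mus 1 y * exp (- (y - mu i)\<^sup>2 / 2) / real M"
    by (rule divide_right_mono) simp
  also have "\<dots> \<le> normal_density mus 1 y * weight M mu i y"
    using mult_left_mono[OF gaussian_div_card_le_weight[OF assms(1)] normal_density_nonneg] by simp
  finally have density_bound: "exp (- 4 - 9 * a\<^sup>2 / 4) / 3 / real M \<le> normal_density mus 1 y * weight M mu i y" .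
  have "a / 2 \<le> y"
    using assms(3,5) y(1) by (simp add: field_simps)
  with density_bound have "exp (- 4 - 9 * a\<^sup>2 / 4) / 3 / real M * (a / 2) \<le> normal_density mus 1 y * weight M mu i y * y"
    using assms(2) weight_nonneg[OF assms(1), of mu y] by (intro mult_mono) auto
  moreover have "a / (5 * real M) * exp (- 9 * a\<^sup>2 / 2) \<le> exp (- 4 - 9 * a\<^sup>2 / 4) / 3 / real M * (a / 2)"
  proof -
    have "1 / 5 \<le> 9 * a\<^sup>2 / 4 - 4"
      using power_mono[of 3 a 2] assms(2) by simp
    then have "6 / 5 \<le> exp (9 * a\<^sup>2 / 4 - 4)"
      using exp_ge_add_one_self[of "9 * a\<^sup>2 / 4 - 4"] by linarith
    moreover have "exp (- 4 - 9 * a\<^sup>2 / 4) = exp (- 9 * a\<^sup>2 / 2) * exp (9 * a\<^sup>2 / 4 - 4)"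
      by (simp add: exp_add[symmetric] field_simps)
    ultimately have "exp (- 9 * a\<^sup>2 / 2) * (6 / 5) \<le> exp (- 4 - 9 * a\<^sup>2 / 4)"
      by simp
    then show ?thesis
      using assms(1,2) by (simp add: field_simps)
  qed
  ultimately show ?thesis
    by (simp add: mult_ac)
qed

theorem lemma5:
  fixes M :: nat and a mustar :: real and mu :: "nat \<Rightarrow> real" and i :: nat
  assumes "M \<ge> 1"
    and "a > ln (real M) + 3"
    and "mustar \<ge> a"
    and "i < M"
    and "mu i \<ge> 0"
  shows "(\<integral>x. weight M mu i x * x \<partial>(density lborel (normal_density mustar 1))) \<ge> 0
    \<and> (mustar \<le> 3 * a \<and> mu i \<le> 4 * a \<longrightarrow>
        (\<integral>x. weight M mu i x * x \<partial>(density lborel (normal_density mustar 1)))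
          \<ge> a / (5 * real M) * exp (- 9 * a\<^sup>2 / 2))"
proof -
  let ?g = "\<lambda>x. normal_density mustar 1 x * (weight M mu i x * x)"
  let ?R = "{0..<1} \<union> {2<..} :: real set"
  have expectation: "(\<integral>x. weight M mu i x * x \<partial>density lborel (normal_density mustar 1)) = (\<integral>x. ?g x \<partial>lborel)"
    by (simp add: integral_density)
  have "0 \<le> ln (real M)"
    using assms(1) by simp
  then have a: "3 < a"
    using assms(2) by linarith
  have g_nonneg: "0 \<le> ?g x" if "x \<in> ?R" for x
    using that weight_nonneg[OF assms(4)] by auto
  have restriction: "(\<integral>x. ?g x * indicator ?R x \<partial>lborel) \<le> (\<integral>x. ?g x \<partial>lborel)"
    using assms by (intro integral_normal_density_mult_weight_mult_ge_restricted) auto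
  have "0 \<le> (\<integral>x. ?g x * indicator ?R x \<partial>lborel)"
    using g_nonneg by (intro integral_nonneg_AE AE_I2) (simp add: indicator_def)
  moreover have "a / (5 * real M) * exp (- 9 * a\<^sup>2 / 2) \<le> (\<integral>x. ?g x * indicator ?R x \<partial>lborel)"
    if "mustar \<le> 3 * a \<and> mu i \<le> 4 * a"
  proof (rule integral_mult_indicator_ge[where c = "(mu i + mustar) / 2 + 1", OF _ _ _ g_nonneg])
    show "integrable lborel ?g"
      using integrable_mult_weight[OF integrable_normal_moment_nz_1 assms(4)] by (simp add: mult_ac)
    show "{(mu i + mustar) / 2 + 1..(mu i + mustar) / 2 + 1 + 1} \<subseteq> ?R"
      using assms(3,5) a by (auto simp: field_simps)
    fix x
    assume "x \<in> {(mu i + mustar) / 2 + 1..(mu i + mustar) / 2 + 1 + 1}"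
    then show "a / (5 * real M) * exp (- 9 * a\<^sup>2 / 2) \<le> ?g x"
      using assms(3-5) a that by (intro normal_density_mult_weight_mult_ge_near_midpoint) auto
  qed simp
  ultimately show ?thesis
    using expectation restriction by auto
qed

end
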